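(* Let $m_1,\ldots,m_n\ge 2$ be integers, let $\mathcal{B}\subseteq\{0,1\}^n$, and let $G=\mathrm{NEPS}(K_{m_1},\ldots,K_{m_n};\mathcal{B})$, where $K_m$ is the complete graph on $m$ vertices. Then for all vertices $v,w\in V(G)$ and every integer $r\ge0$, $$w_{G}(r,v,w)=\sum_{(\beta_1,\ldots,\beta_{r})\in \mathcal{B}^{r}}\ \prod_{t=1}^{n} a_{t},$$ where $\beta_\ell=(\beta_{\ell1},\ldots,\beta_{\ell n})$, $\ell_t:=\beta_{1t}+\cdots+\beta_{rt}$, and $$a_{t}=\begin{cases}\frac{m_t-1}{m_t}\big((m_{t}-1)^{\ell_t-1}-(-1)^{\ell_t-1}\big) & \text{if } \pi_{t}(v)=\pi_t(w),\\[1mm] \frac{1}{m_t}\big((m_{t}-1)^{\ell_t}-(-1)^{\ell_t}\big) & \text{if } \pi_{t}(v)\neq\pi_t(w),\end{cases}$$ with $\pi_t$ the projection onto the $t$-th coordinate.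
   Context: Given $\mathcal{B}\subseteq\{0,1\}^n$ and graphs $G_1,\ldots,G_n$, $\mathrm{NEPS}(G_1,\ldots,G_n;\mathcal{B})$ is the graph with vertex set $V(G_1)\times\cdots\times V(G_n)$, in which $(x_1,\ldots,x_n)$ and $(y_1,\ldots,y_n)$ are adjacent iff there is $(\alpha_1,\ldots,\alpha_n)\in\mathcal{B}$ such that $x_i=y_i$ whenever $\alpha_i=0$, and $x_i,y_i$ are distinct and adjacent in $G_i$ whenever $\alpha_i=1$. $w_G(r,v,w)$ is the number of walks of length $r$ from $v$ to $w$ in $G$ (with $w_G(0,v,w)=1$ if $v=w$, $0$ otherwise). *)

theory Defs
  imports Complex_Main
begin

text \<open>Indices of the NEPS factors are 0-based: t ranges over {0..<n}.
  Vertices of the NEPS are lists of length n; elements of the basis B are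
  0/1-lists of length n.\<close>

definition neps_verts :: "nat \<Rightarrow> (nat \<Rightarrow> 'a set) \<Rightarrow> 'a list set" where
  "neps_verts n V = {x. length x = n \<and> (\<forall>i<n. x ! i \<in> V i)}"

definition neps_adj :: "nat \<Rightarrow> (nat \<Rightarrow> 'a \<Rightarrow> 'a \<Rightarrow> bool) \<Rightarrow> nat list set
    \<Rightarrow> 'a list \<Rightarrow> 'a list \<Rightarrow> bool" where
  "neps_adj n E B x y =
     (\<exists>\<alpha>\<in>B. \<forall>i<n. (\<alpha> ! i = 0 \<longrightarrow> x ! i = y ! i) \<and>
                     (\<alpha> ! i = 1 \<longrightarrow> x ! i \<noteq> y ! i \<and> E i (x ! i) (y ! i)))"

definition K_verts :: "nat \<Rightarrow> nat set" where
  "K_verts m = {0..<m}"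

definition K_adj :: "nat \<Rightarrow> nat \<Rightarrow> nat \<Rightarrow> bool" where
  "K_adj m a b = (a < m \<and> b < m \<and> a \<noteq> b)"

definition walks :: "'a set \<Rightarrow> ('a \<Rightarrow> 'a \<Rightarrow> bool) \<Rightarrow> nat \<Rightarrow> 'a \<Rightarrow> 'a \<Rightarrow> nat" where
  "walks V adj r v w = card {p. length p = Suc r \<and> set p \<subseteq> V \<and> p ! 0 = v \<and> p ! r = w
                              \<and> (\<forall>i<r. adj (p ! i) (p ! Suc i))}"

end

theory Submission
  imports Defs
begin

(* An edge u -- u' of the NEPS comes from exactly one \<beta> \<in> B, the indicator of the coordinates
  in which u and u' differ. So a walk of length r from v to w is a sequence (\<beta>_1, ..., \<beta>_r) in
  B^r together with, for every coordinate t, a walk from v_t to w_t in G_t that stands still in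
  the steps with \<beta>_jt = 0 and moves in the l_t = \<beta>_1t + ... + \<beta>_rt others; hence
  w_G(r,v,w) = \<Sum> over B^r of \<Prod>_t w_{G_t}(l_t, v_t, w_t). In K_m there are (m-1)^l walks of
  length l ending at b, and w(l+1,a,b) = (m-1)^l - w(l,a,b); by induction
  w(l,a,b) = ((m-1)^l - (-1)^l)/m + [a = b] (-1)^l, which is the claimed closed form. *)

lemma prod_of_bool_mult:
  assumes "finite A"
  shows "(\<Prod>i\<in>A. of_bool (P i) * f i) = of_bool (\<forall>i\<in>A. P i) * (\<Prod>i\<in>A. f i :: 'b :: comm_semiring_1)"
proof (cases "\<forall>i\<in>A. P i")
  case False
  then have "\<exists>i\<in>A. of_bool (P i) * f i = 0"
    by auto
  with assms have "(\<Prod>i\<in>A. of_bool (P i) * f i) = 0"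
    by (rule prod_zero)
  with False show ?thesis
    by auto
qed simp

lemma sum_lists_length_Suc:
  "(\<Sum>bs\<in>{bs. length bs = Suc r \<and> set bs \<subseteq> B}. f bs)
     = (\<Sum>\<beta>\<in>B. \<Sum>bs\<in>{bs. length bs = r \<and> set bs \<subseteq> B}. f (\<beta> # bs))"
proof -
  have "{bs. length bs = Suc r \<and> set bs \<subseteq> B}
      = (\<lambda>(bs, \<beta>). \<beta> # bs) ` ({bs. length bs = r \<and> set bs \<subseteq> B} \<times> B)"
    using lists_length_Suc_eq[of B r] by (simp add: conj_commute)
  then have "(\<Sum>bs\<in>{bs. length bs = Suc r \<and> set bs \<subseteq> B}. f bs)
      = (\<Sum>(bs, \<beta>)\<in>{bs. length bs = r \<and> set bs \<subseteq> B} \<times> B. f (\<beta> # bs))"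
    by (simp add: sum.reindex inj_on_def case_prod_unfold)
  also have "\<dots> = (\<Sum>bs\<in>{bs. length bs = r \<and> set bs \<subseteq> B}. \<Sum>\<beta>\<in>B. f (\<beta> # bs))"
    by (simp add: sum.cartesian_product)
  finally show ?thesis
    by (simp add: sum.swap[of _ B])
qed

definition walk_set :: "'a set \<Rightarrow> ('a \<Rightarrow> 'a \<Rightarrow> bool) \<Rightarrow> nat \<Rightarrow> 'a \<Rightarrow> 'a \<Rightarrow> 'a list set" where
  "walk_set V adj r v w = {p. length p = Suc r \<and> set p \<subseteq> V \<and> p ! 0 = v \<and> p ! r = w
                              \<and> (\<forall>i<r. adj (p ! i) (p ! Suc i))}"

lemma walks_eq_card_walk_set: "walks V adj r v w = card (walk_set V adj r v w)"
  by (simp add: walks_def walk_set_def)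

lemma finite_walk_set: "finite V \<Longrightarrow> finite (walk_set V adj r v w)"
  by (rule finite_subset[OF _ finite_lists_length_eq[of V "Suc r"]]) (auto simp: walk_set_def)

lemma walks_0: "walks V adj 0 v w = of_bool (v = w \<and> v \<in> V)"
proof -
  have "walk_set V adj 0 v w = (if v = w \<and> v \<in> V then {[v]} else {})"
    by (auto simp: walk_set_def length_Suc_conv)
  then show ?thesis
    by (simp add: walks_eq_card_walk_set)
qed

lemma walk_set_Suc:
  assumes "v \<in> V"
  shows "walk_set V adj (Suc r) v w = (\<Union>u\<in>{u\<in>V. adj v u}. (#) v ` walk_set V adj r u w)"
proof (intro set_eqI iffI)
  fix p assume p: "p \<in> walk_set V adj (Suc r) v w"
  then obtain q where q: "p = v # q" "length q = Suc r"
    by (auto simp: walk_set_def length_Suc_conv)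
  with p have "q \<in> walk_set V adj r (q ! 0) w" "q ! 0 \<in> V" "adj v (q ! 0)"
    by (fastforce simp: walk_set_def)+
  with q show "p \<in> (\<Union>u\<in>{u\<in>V. adj v u}. (#) v ` walk_set V adj r u w)"
    by blast
next
  fix p assume "p \<in> (\<Union>u\<in>{u\<in>V. adj v u}. (#) v ` walk_set V adj r u w)"
  then obtain u q where "u \<in> V" "adj v u" "q \<in> walk_set V adj r u w" "p = v # q"
    by auto
  with assms show "p \<in> walk_set V adj (Suc r) v w"
    by (auto simp: walk_set_def nth_Cons' less_Suc_eq_0_disj)
qed

lemma walks_Suc:
  assumes "finite V" "v \<in> V"
  shows "walks V adj (Suc r) v w = (\<Sum>u\<in>{u\<in>V. adj v u}. walks V adj r u w)"
proof -
  have disjoint: "walk_set V adj r u w \<inter> walk_set V adj r u' w = {}" if "u \<noteq> u'" for u u'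
    using that by (auto simp: walk_set_def)
  have "card (walk_set V adj (Suc r) v w) = (\<Sum>u\<in>{u\<in>V. adj v u}. card ((#) v ` walk_set V adj r u w))"
    unfolding walk_set_Suc[OF assms(2)]
    by (rule card_UN_disjoint) (use disjoint in \<open>auto simp: assms finite_walk_set\<close>)
  also have "\<dots> = (\<Sum>u\<in>{u\<in>V. adj v u}. card (walk_set V adj r u w))"
    by (simp add: card_image)
  finally show ?thesis
    by (simp add: walks_eq_card_walk_set)
qed

definition neps_coord_adj :: "nat \<Rightarrow> ('a \<Rightarrow> 'a \<Rightarrow> bool) \<Rightarrow> 'a \<Rightarrow> 'a \<Rightarrow> bool" where
  "neps_coord_adj b E x y \<longleftrightarrow> (b = 0 \<longrightarrow> x = y) \<and> (b = 1 \<longrightarrow> x \<noteq> y \<and> E x y)"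

lemma neps_adj_iff:
  "neps_adj n E B x y \<longleftrightarrow> (\<exists>\<alpha>\<in>B. \<forall>i<n. neps_coord_adj (\<alpha> ! i) (E i) (x ! i) (y ! i))"
  by (simp add: neps_adj_def neps_coord_adj_def)

lemma neps_coord_adj_unique:
  "b \<in> {0, 1} \<Longrightarrow> b' \<in> {0, 1} \<Longrightarrow> neps_coord_adj b E x y \<Longrightarrow> neps_coord_adj b' E x y \<Longrightarrow> b = b'"
  by (auto simp: neps_coord_adj_def)

lemma of_bool_neps_adj:
  assumes B: "\<forall>\<beta>\<in>B. length \<beta> = n \<and> set \<beta> \<subseteq> {0, 1}" and "finite B"
  shows "of_bool (neps_adj n E B x y)
           = (\<Sum>\<alpha>\<in>B. of_bool (\<forall>i<n. neps_coord_adj (\<alpha> ! i) (E i) (x ! i) (y ! i)) :: 'b :: semiring_1)"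
proof -
  let ?P = "\<lambda>\<alpha>. \<forall>i<n. neps_coord_adj (\<alpha> ! i) (E i) (x ! i) (y ! i)"
  have "\<alpha> = \<alpha>'" if "\<alpha> \<in> B" "\<alpha>' \<in> B" "?P \<alpha>" "?P \<alpha>'" for \<alpha> \<alpha>'
  proof (rule nth_equalityI)
    show "length \<alpha> = length \<alpha>'"
      using that B by simp
    show "\<alpha> ! i = \<alpha>' ! i" if "i < length \<alpha>" for i
      using neps_coord_adj_unique[of "\<alpha> ! i" "\<alpha>' ! i"] \<open>i < length \<alpha>\<close> \<open>\<alpha> \<in> B\<close> \<open>\<alpha>' \<in> B\<close>
        \<open>?P \<alpha>\<close> \<open>?P \<alpha>'\<close> B nth_mem by (metis subsetD)
  qed
  then have "B \<inter> {\<alpha>. ?P \<alpha>} = {} \<or> (\<exists>\<alpha>. B \<inter> {\<alpha>. ?P \<alpha>} = {\<alpha>})"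
    by blast
  then show ?thesis
    using \<open>finite B\<close> by (auto simp: neps_adj_iff)
qed

lemma walks_neps_coord_step:
  assumes "finite V" "y \<in> V" "b \<in> {0, 1}" "\<forall>x. \<not> E x x"
  shows "(\<Sum>x\<in>V. of_bool (neps_coord_adj b E y x) * walks V E l x w) = walks V E (b + l) y w"
proof -
  have "V \<inter> {x. neps_coord_adj b E y x} = (if b = 0 then {y} else {x \<in> V. E y x})"
    using assms by (auto simp: neps_coord_adj_def)
  then show ?thesis
    using assms by (auto simp: walks_Suc)
qed

lemma finite_neps_verts: "\<forall>t<n. finite (V t) \<Longrightarrow> finite (neps_verts n V)"
  by (rule finite_subset[OF _ finite_lists_length_eq[of "\<Union>t<n. V t" n]])
     (fastforce simp: neps_verts_def in_set_conv_nth)+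

lemma neps_verts_Suc:
  "neps_verts (Suc n) V = (\<lambda>(x, xs). x # xs) ` (V 0 \<times> neps_verts n (\<lambda>i. V (Suc i)))"
proof (intro set_eqI iffI)
  fix u assume "u \<in> neps_verts (Suc n) V"
  then obtain x xs where "u = x # xs" "length xs = n" "\<forall>i<Suc n. u ! i \<in> V i"
    by (auto simp: neps_verts_def length_Suc_conv)
  then show "u \<in> (\<lambda>(x, xs). x # xs) ` (V 0 \<times> neps_verts n (\<lambda>i. V (Suc i)))"
    by (force simp: neps_verts_def)
qed (auto simp: neps_verts_def nth_Cons split: nat.splits)

lemma sum_neps_verts_prod:
  "(\<Sum>u\<in>neps_verts n V. \<Prod>t<n. g t (u ! t)) = (\<Prod>t<n. \<Sum>x\<in>V t. g t x :: 'b :: comm_semiring_1)"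
proof (induction n arbitrary: V g)
  case 0
  have "neps_verts 0 V = {[]}"
    by (auto simp: neps_verts_def)
  then show ?case
    by simp
next
  case (Suc n)
  have "(\<Sum>u\<in>neps_verts (Suc n) V. \<Prod>t<Suc n. g t (u ! t))
      = (\<Sum>x\<in>V 0. \<Sum>xs\<in>neps_verts n (\<lambda>i. V (Suc i)). g 0 x * (\<Prod>t<n. g (Suc t) (xs ! t)))"
    unfolding neps_verts_Suc prod.lessThan_Suc_shift
    by (subst sum.reindex) (auto simp: inj_on_def sum.cartesian_product case_prod_beta)
  also have "\<dots> = (\<Sum>x\<in>V 0. g 0 x) * (\<Prod>t<n. \<Sum>x\<in>V (Suc t). g (Suc t) x)"
    using Suc.IH[where V = "\<lambda>i. V (Suc i)" and g = "\<lambda>t. g (Suc t)"] by (simp add: sum_product[symmetric])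
  also have "\<dots> = (\<Prod>t<Suc n. \<Sum>x\<in>V t. g t x)"
    by (simp only: prod.lessThan_Suc_shift)
  finally show ?case .
qed

theorem walks_neps:
  fixes E :: "nat \<Rightarrow> 'a \<Rightarrow> 'a \<Rightarrow> bool"
  assumes fin: "\<forall>t<n. finite (V t)"
    and irrefl: "\<forall>t<n. \<forall>x. \<not> E t x x"
    and B: "\<forall>\<beta>\<in>B. length \<beta> = n \<and> set \<beta> \<subseteq> {0, 1}"
    and v: "v \<in> neps_verts n V" and w: "w \<in> neps_verts n V"
  shows "walks (neps_verts n V) (neps_adj n E B) r v w
           = (\<Sum>bs\<in>{bs. length bs = r \<and> set bs \<subseteq> B}.
                \<Prod>t<n. walks (V t) (E t) (\<Sum>j<r. bs ! j ! t) (v ! t) (w ! t))"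
  using v
proof (induction r arbitrary: v)
  case 0
  have "v = w \<longleftrightarrow> (\<forall>t<n. v ! t = w ! t)"
    using 0 w by (auto simp: neps_verts_def intro: nth_equalityI)
  moreover have "{bs. length bs = 0 \<and> set bs \<subseteq> B} = {[]}"
    by auto
  ultimately show ?case
    using 0 w prod_of_bool_mult[where f = "\<lambda>_. 1"] by (auto simp: walks_0 neps_verts_def)
next
  case (Suc r)
  let ?Vn = "neps_verts n V" and ?adj = "neps_adj n E B"
  let ?BS = "{bs. length bs = r \<and> set bs \<subseteq> B}"
  let ?P = "\<lambda>\<alpha> u. \<forall>t<n. neps_coord_adj (\<alpha> ! t) (E t) (v ! t) (u ! t)"
  have "finite B"
    by (rule finite_subset[OF _ finite_lists_length_eq[of "{0, 1}" n]]) (use B in auto)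
  have "walks ?Vn ?adj (Suc r) v w = (\<Sum>u\<in>?Vn. of_bool (?adj v u) * walks ?Vn ?adj r u w)"
    unfolding walks_Suc[OF finite_neps_verts[OF fin] Suc.prems]
      sum_of_bool_mult_eq[OF finite_neps_verts[OF fin]]
    by (simp add: Int_def)
  also have "\<dots> = (\<Sum>u\<in>?Vn. \<Sum>\<alpha>\<in>B. \<Sum>bs\<in>?BS. of_bool (?P \<alpha> u) *
                     (\<Prod>t<n. walks (V t) (E t) (\<Sum>j<r. bs ! j ! t) (u ! t) (w ! t)))"
    using Suc.IH by (simp add: of_bool_neps_adj[OF B \<open>finite B\<close>] sum_distrib_left sum_distrib_right
        sum.swap[where A = ?BS and B = B])
  also have "\<dots> = (\<Sum>u\<in>?Vn. \<Sum>\<alpha>\<in>B. \<Sum>bs\<in>?BS. \<Prod>t<n.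
                     of_bool (neps_coord_adj (\<alpha> ! t) (E t) (v ! t) (u ! t)) *
                     walks (V t) (E t) (\<Sum>j<r. bs ! j ! t) (u ! t) (w ! t))"
    by (simp add: prod_of_bool_mult lessThan_def)
  also have "\<dots> = (\<Sum>\<alpha>\<in>B. \<Sum>bs\<in>?BS. \<Sum>u\<in>?Vn. \<Prod>t<n.
                     of_bool (neps_coord_adj (\<alpha> ! t) (E t) (v ! t) (u ! t)) *
                     walks (V t) (E t) (\<Sum>j<r. bs ! j ! t) (u ! t) (w ! t))"
    by (subst sum.swap) (rule sum.cong[OF refl], rule sum.swap)
  also have "\<dots> = (\<Sum>\<alpha>\<in>B. \<Sum>bs\<in>?BS. \<Prod>t<n. \<Sum>x\<in>V t.
                     of_bool (neps_coord_adj (\<alpha> ! t) (E t) (v ! t) x) *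
                     walks (V t) (E t) (\<Sum>j<r. bs ! j ! t) x (w ! t))"
    by (intro sum.cong refl) (rule sum_neps_verts_prod)
  also have "\<dots> = (\<Sum>\<alpha>\<in>B. \<Sum>bs\<in>?BS. \<Prod>t<n.
                     walks (V t) (E t) (\<alpha> ! t + (\<Sum>j<r. bs ! j ! t)) (v ! t) (w ! t))"
  proof (intro sum.cong prod.cong refl walks_neps_coord_step)
    fix \<alpha> t assume "\<alpha> \<in> B" "t \<in> {..<n}"
    then show "finite (V t)" "v ! t \<in> V t" "\<alpha> ! t \<in> {0, 1}" "\<forall>x. \<not> E t x x"
      using fin irrefl B Suc.prems nth_mem by (fastforce simp: neps_verts_def)+
  qed
  also have "\<dots> = (\<Sum>bs\<in>{bs. length bs = Suc r \<and> set bs \<subseteq> B}.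
                     \<Prod>t<n. walks (V t) (E t) (\<Sum>j<Suc r. bs ! j ! t) (v ! t) (w ! t))"
    by (simp add: sum_lists_length_Suc sum.lessThan_Suc_shift del: sum.lessThan_Suc)
  finally show ?case .
qed

lemma walks_complete_graph:
  assumes "a < m" "b < m"
  shows "real (walks (K_verts m) (K_adj m) l a b)
           = ((real m - 1) ^ l - (-1) ^ l) / real m + of_bool (a = b) * (-1) ^ l"
  using assms(1)
proof (induction l arbitrary: a)
  case 0
  then show ?case
    by (simp add: walks_0 K_verts_def assms(2))
next
  case (Suc l)
  let ?W = "\<lambda>x. real (walks (K_verts m) (K_adj m) l x b)"
  have m: "real m \<noteq> 0"
    using assms by simp
  have "{u \<in> K_verts m. K_adj m a u} = {0..<m} - {a}"
    using Suc.prems by (auto simp: K_verts_def K_adj_def)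
  then have "real (walks (K_verts m) (K_adj m) (Suc l) a b) = (\<Sum>x\<in>{0..<m}. ?W x) - ?W a"
    using Suc.prems by (simp add: walks_Suc K_verts_def sum_diff1)
  also have "(\<Sum>x\<in>{0..<m}. ?W x)
      = (\<Sum>x\<in>{0..<m}. ((real m - 1) ^ l - (-1) ^ l) / real m + of_bool (x = b) * (-1) ^ l)"
    using Suc.IH by (intro sum.cong) auto
  also have "\<dots> = (real m - 1) ^ l"
    using assms(2) m by (simp add: sum.distrib)
  also have "\<dots> - ?W a = ((real m - 1) ^ Suc l - (-1) ^ Suc l) / real m + of_bool (a = b) * (-1) ^ Suc l"
    using Suc.IH[OF Suc.prems] m by (simp add: field_simps)
  finally show ?case .
qed

lemma walks_complete_graph_powi:
  assumes "2 \<le> m" "a < m" "b < m"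
  shows "real (walks (K_verts m) (K_adj m) l a b)
           = (let l = int l; mt = real m in
              if a = b
              then (mt - 1) / mt * ((mt - 1) powi (l - 1) - (-1) powi (l - 1))
              else 1 / mt * ((mt - 1) powi l - (-1) powi l))"
proof -
  \<comment> \<open>for l = 0 the diagonal case reads (m-1)/m ((m-1) powi -1 + 1), which is 1 only if m \<noteq> 1\<close>
  have m: "real m - 1 \<noteq> 0" "real m \<noteq> 0"
    using assms(1) by auto
  show ?thesis
  proof (cases l)
    case 0
    with m show ?thesis
      by (simp add: walks_complete_graph[OF assms(2,3)] power_int_minus field_simps)
  next
    case (Suc k)
    have exponent: "int (Suc k) - 1 = int k"
      by simp
    from m show ?thesis
      unfolding Suc Let_def exponent power_int_of_nat
      by (simp add: walks_complete_graph[OF assms(2,3)] field_simps)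
  qed
qed

theorem corollary3p2:
  fixes n :: nat and m :: "nat \<Rightarrow> nat" and B :: "nat list set"
    and v w :: "nat list" and r :: nat
  assumes m_ge: "\<forall>t<n. m t \<ge> 2"
    and B_sub: "\<forall>\<beta>\<in>B. length \<beta> = n \<and> set \<beta> \<subseteq> {0, 1}"
    and v_in: "v \<in> neps_verts n (\<lambda>t. K_verts (m t))"
    and w_in: "w \<in> neps_verts n (\<lambda>t. K_verts (m t))"
  shows "real (walks (neps_verts n (\<lambda>t. K_verts (m t))) (neps_adj n (\<lambda>t. K_adj (m t)) B) r v w)
    = (\<Sum>bs\<in>{bs. length bs = r \<and> set bs \<subseteq> B}.
         \<Prod>t\<in>{0..<n}.
           (let l = int (\<Sum>j<r. bs ! j ! t); mt = real (m t) in
            if v ! t = w ! t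
            then (mt - 1) / mt * ((mt - 1) powi (l - 1) - (-1) powi (l - 1))
            else 1 / mt * ((mt - 1) powi l - (-1) powi l)))"
proof -
  have "\<forall>t<n. finite (K_verts (m t))" "\<forall>t<n. \<forall>x. \<not> K_adj (m t) x x"
    by (simp_all add: K_verts_def K_adj_def)
  from walks_neps[where V = "\<lambda>t. K_verts (m t)" and E = "\<lambda>t. K_adj (m t)", OF this B_sub v_in w_in]
  have walks_product: "real (walks (neps_verts n (\<lambda>t. K_verts (m t))) (neps_adj n (\<lambda>t. K_adj (m t)) B) r v w)
    = (\<Sum>bs\<in>{bs. length bs = r \<and> set bs \<subseteq> B}. \<Prod>t<n.
         real (walks (K_verts (m t)) (K_adj (m t)) (\<Sum>j<r. bs ! j ! t) (v ! t) (w ! t)))"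
    by simp
  show ?thesis
    unfolding walks_product atLeast0LessThan
  proof (intro sum.cong prod.cong refl walks_complete_graph_powi)
    fix t assume "t \<in> {..<n}"
    with m_ge v_in w_in show "2 \<le> m t" "v ! t < m t" "w ! t < m t"
      by (auto simp: neps_verts_def K_verts_def)
  qed
qed

end
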